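(* Let $n\ge 6$. Then the set \[D=\{(i,2i-1),(i,2i): 1\le i\le n-4\}\cup\{(n-3,2n-7),(n-2,2n-7),(n-1,2n-7),(n,2n-6)\}\] is an identifying code of $K_n\times K_{2n-5}$ of cardinality $2n-4$.
   Context: $K_n\times K_m$ is the direct product of complete graphs: vertex set $[n]\times[m]$, with $(i,r)$ adjacent to $(j,s)$ iff $i\ne j$ and $r \ne s$. An identifying code is a dominating set $C$ with $N[x]\cap C\ne N[y]\cap C$ for all distinct vertices $x,y$ ($N[x]$ the closed neighborhood). *)

theory Defs
  imports Main
begin

text \<open>Direct product of complete graphs K_n x K_m on vertex set [n] x [m].\<close>

definition KV :: "nat \<Rightarrow> nat \<Rightarrow> (nat \<times> nat) set" where
  "KV n m = {1..n} \<times> {1..m}"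

definition Kadj :: "nat \<times> nat \<Rightarrow> nat \<times> nat \<Rightarrow> bool" where
  "Kadj x y \<longleftrightarrow> fst x \<noteq> fst y \<and> snd x \<noteq> snd y"

definition closed_nbhd :: "nat \<Rightarrow> nat \<Rightarrow> nat \<times> nat \<Rightarrow> (nat \<times> nat) set" where
  "closed_nbhd n m x = {y \<in> KV n m. y = x \<or> Kadj x y}"

definition dominating :: "nat \<Rightarrow> nat \<Rightarrow> (nat \<times> nat) set \<Rightarrow> bool" where
  "dominating n m C \<longleftrightarrow> C \<subseteq> KV n m \<and> (\<forall>x \<in> KV n m. closed_nbhd n m x \<inter> C \<noteq> {})"

definition identifying_code :: "nat \<Rightarrow> nat \<Rightarrow> (nat \<times> nat) set \<Rightarrow> bool" where
  "identifying_code n m C \<longleftrightarrow> dominating n m C \<and>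
     (\<forall>x \<in> KV n m. \<forall>y \<in> KV n m. x \<noteq> y \<longrightarrow> closed_nbhd n m x \<inter> C \<noteq> closed_nbhd n m y \<inter> C)"

end

theory Submission
  imports Defs
begin

text \<open>
  In K_n x K_m a vertex c lies in the closed neighbourhood of x iff c = x or
  c shares neither row nor column with x.  Hence two distinct vertices x, y are separated
  by a code C as soon as some c in C lies in exactly one of N[x], N[y], and this is easy to
  guarantee by a purely combinatorial condition on rows and columns:
    (a) any two rows together contain a code vertex,
    (b) any two columns together contain a code vertex,
    (c) for any two rows a, a' and columns b, b' (a <> a', b <> b') some code vertex lies on
        one of the rows a, a' but on neither column b, b', or vice versa.
  Condition (b) separates vertices in a common row, (a) vertices in a common column, and
  (c) all remaining pairs.
\<close>

lemma traces_differ: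
  assumes "C \<subseteq> KV n m" "c \<in> C"
    and "(c = x \<or> Kadj x c) \<noteq> (c = y \<or> Kadj y c)"
  shows "closed_nbhd n m x \<inter> C \<noteq> closed_nbhd n m y \<inter> C"
proof -
  have "c \<in> closed_nbhd n m z \<inter> C \<longleftrightarrow> c = z \<or> Kadj z c" for z
    using assms(1,2) unfolding closed_nbhd_def by auto
  then show ?thesis using assms(3) by blast
qed

lemma identifying_code_criterion:
  assumes sub: "C \<subseteq> KV n m"
    and dom: "\<And>x. x \<in> KV n m \<Longrightarrow> \<exists>c\<in>C. c = x \<or> Kadj x c"
    and rows: "\<And>a a'. a \<in> {1..n} \<Longrightarrow> a' \<in> {1..n} \<Longrightarrow> a \<noteq> a' \<Longrightarrow> \<exists>c\<in>C. fst c \<in> {a, a'}"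
    and cols: "\<And>b b'. b \<in> {1..m} \<Longrightarrow> b' \<in> {1..m} \<Longrightarrow> b \<noteq> b' \<Longrightarrow> \<exists>c\<in>C. snd c \<in> {b, b'}"
    and rect: "\<And>a a' b b'. a \<in> {1..n} \<Longrightarrow> a' \<in> {1..n} \<Longrightarrow> b \<in> {1..m} \<Longrightarrow> b' \<in> {1..m} \<Longrightarrow>
                 a \<noteq> a' \<Longrightarrow> b \<noteq> b' \<Longrightarrow> \<exists>c\<in>C. (fst c \<in> {a, a'}) \<noteq> (snd c \<in> {b, b'})"
  shows "identifying_code n m C"
proof -
  have "closed_nbhd n m x \<inter> C \<noteq> {}" if "x \<in> KV n m" for x
    using dom[OF that] sub that unfolding closed_nbhd_def by blast
  moreover have "closed_nbhd n m x \<inter> C \<noteq> closed_nbhd n m y \<inter> C"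
    if "x \<in> KV n m" "y \<in> KV n m" "x \<noteq> y" for x y
  proof -
    obtain a b a' b' where xy: "x = (a, b)" "y = (a', b')" by (cases x, cases y)
    note distinct = that(3)[unfolded xy]
    have ranges: "a \<in> {1..n}" "a' \<in> {1..n}" "b \<in> {1..m}" "b' \<in> {1..m}"
      using that(1,2) unfolding xy by (auto simp: KV_def)
    consider "a = a'" "b \<noteq> b'" | "a \<noteq> a'" "b = b'" | "a \<noteq> a'" "b \<noteq> b'"
      using distinct by blast
    then have "\<exists>c\<in>C. (c = (a, b) \<or> Kadj (a, b) c) \<noteq> (c = (a', b') \<or> Kadj (a', b') c)"
    proof cases
      case 1
      with cols ranges obtain c where "c \<in> C" "snd c \<in> {b, b'}" by meson
      with 1 show ?thesis by (intro bexI[of _ c]) (auto simp: Kadj_def prod_eq_iff)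
    next
      case 2
      with rows ranges obtain c where "c \<in> C" "fst c \<in> {a, a'}" by meson
      with 2 show ?thesis by (intro bexI[of _ c]) (auto simp: Kadj_def prod_eq_iff)
    next
      case 3
      with rect ranges obtain c where "c \<in> C" "(fst c \<in> {a, a'}) \<noteq> (snd c \<in> {b, b'})" by meson
      with 3 show ?thesis by (intro bexI[of _ c]) (auto simp: Kadj_def prod_eq_iff)
    qed
    then show ?thesis using traces_differ[OF sub] unfolding xy by blast
  qed
  ultimately show ?thesis
    using sub unfolding identifying_code_def dominating_def by auto
qed

definition code_D :: "nat \<Rightarrow> (nat \<times> nat) set" where
  "code_D n = {(i, 2*i - 1) | i. 1 \<le> i \<and> i \<le> n - 4} \<union> {(i, 2*i) | i. 1 \<le> i \<and> i \<le> n - 4}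
            \<union> {(n - 3, 2*n - 7), (n - 2, 2*n - 7), (n - 1, 2*n - 7), (n, 2*n - 6)}"

lemma mem_code_D:
  "(c, d) \<in> code_D n \<longleftrightarrow>
     (1 \<le> c \<and> c \<le> n - 4 \<and> (d = 2*c - 1 \<or> d = 2*c))
     \<or> (n - 3 \<le> c \<and> c \<le> n - 1 \<and> d = 2*n - 7) \<or> (c = n \<and> d = 2*n - 6)"
  unfolding code_D_def by (auto; arith)

lemma code_D_subset: "n \<ge> 6 \<Longrightarrow> code_D n \<subseteq> KV n (2*n - 5)"
  by (auto simp: KV_def mem_code_D)

text \<open>Every vertex is dominated: code vertices in column 2n-7 dominate all vertices outside
  that column, and (n,2n-6) resp. (1,1) dominate the vertices of column 2n-7.\<close>
lemma code_D_dominating: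
  assumes "n \<ge> 6" "(a, b) \<in> KV n (2*n - 5)"
  shows "\<exists>c\<in>code_D n. c = (a, b) \<or> Kadj (a, b) c"
proof (cases "b = 2*n - 7")
  case True
  show ?thesis
  proof (cases "a = n")
    case True
    then show ?thesis using \<open>b = 2*n - 7\<close> assms(1)
      by (intro bexI[of _ "(1, 1)"]) (auto simp: Kadj_def mem_code_D)
  next
    case False
    then show ?thesis using \<open>b = 2*n - 7\<close> assms(1)
      by (intro bexI[of _ "(n, 2*n - 6)"]) (auto simp: Kadj_def mem_code_D)
  qed
next
  case False
  define r where "r = (if a = n - 3 then n - 2 else n - 3)"
  have "r \<noteq> a" "n - 3 \<le> r" "r \<le> n - 1" using assms(1) by (auto simp: r_def)
  then show ?thesis using False
    by (intro bexI[of _ "(r, 2*n - 7)"]) (auto simp: Kadj_def mem_code_D)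
qed

lemma code_D_row:
  assumes "n \<ge> 6" "a \<in> {1..n}"
  shows "\<exists>d. (a, d) \<in> code_D n"
proof -
  consider "a \<le> n - 4" | "n - 3 \<le> a" "a \<le> n - 1" | "a = n"
    using assms unfolding atLeastAtMost_iff by linarith
  then show ?thesis using assms(2) by cases (auto simp: mem_code_D)
qed

lemma code_D_column:
  assumes "n \<ge> 6" "b \<in> {1..2*n - 6}"
  shows "\<exists>c. (c, b) \<in> code_D n"
proof -
  consider "b \<le> 2*n - 8" | "b = 2*n - 7" | "b = 2*n - 6"
    using assms unfolding atLeastAtMost_iff by linarith
  then show ?thesis
  proof cases
    case 1
    then have "1 \<le> (b + 1) div 2 \<and> (b + 1) div 2 \<le> n - 4 \<and>
               (b = 2 * ((b + 1) div 2) - 1 \<or> b = 2 * ((b + 1) div 2))"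
      using assms(2) unfolding atLeastAtMost_iff by presburger
    then show ?thesis by (auto simp: mem_code_D)
  qed (use assms(1) in \<open>auto simp: mem_code_D\<close>)
qed

text \<open>Condition (c) when one of the two rows is a "pair row" a <= n-4: either one of its two
  code vertices avoids the columns b, b', or {b, b'} = {2a-1, 2a}, and then the code vertex
  of row a' found below lies outside these two columns.\<close>
lemma code_D_rect_pair_row:
  assumes "n \<ge> 6" "1 \<le> a" "a \<le> n - 4" "a' \<in> {1..n}" "a \<noteq> a'"
  shows "\<exists>c\<in>code_D n. (fst c \<in> {a, a'}) \<noteq> (snd c \<in> {b, b'})"
proof (cases "{b, b'} = {2*a - 1, 2*a}")
  case True
  obtain d where d: "(a', d) \<in> code_D n" "d \<notin> {2*a - 1, 2*a}"
  proof -
    consider "a' \<le> n - 4" | "n - 3 \<le> a'" "a' \<le> n - 1" | "a' = n"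
      using assms(4) unfolding atLeastAtMost_iff by linarith
    then show thesis
    proof cases
      case 1
      then have "(a', 2*a' - 1) \<in> code_D n" using assms(4) by (simp add: mem_code_D)
      moreover have "2*a' - 1 \<notin> {2*a - 1, 2*a}" using assms by auto
      ultimately show thesis by (rule that)
    next
      case 2
      then have "(a', 2*n - 7) \<in> code_D n" by (simp add: mem_code_D)
      moreover have "2*n - 7 \<notin> {2*a - 1, 2*a}" using assms by auto
      ultimately show thesis by (rule that)
    next
      case 3
      then have "(a', 2*n - 6) \<in> code_D n" by (simp add: mem_code_D)
      moreover have "2*n - 6 \<notin> {2*a - 1, 2*a}" using assms by auto
      ultimately show thesis by (rule that)
    qed
  qed
  then show ?thesis using True by (intro bexI[of _ "(a', d)"]) auto
next
  case False
  then consider "2*a - 1 \<notin> {b, b'}" | "2*a \<notin> {b, b'}" using assms(2) by (auto; arith)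
  then show ?thesis
  proof cases
    case 1
    then show ?thesis using assms(2,3) by (intro bexI[of _ "(a, 2*a - 1)"]) (auto simp: mem_code_D)
  next
    case 2
    then show ?thesis using assms(2,3) by (intro bexI[of _ "(a, 2*a)"]) (auto simp: mem_code_D)
  qed
qed

text \<open>Condition (c) when both rows are among the last four: of the three code vertices in
  column 2n-7 one lies in neither row; it works if 2n-7 is one of the columns b, b', and
  otherwise the column-(2n-7) vertex of row a or a' does.\<close>
lemma code_D_rect_last_rows:
  assumes "n \<ge> 6" "n - 3 \<le> a" "a \<le> n" "n - 3 \<le> a'" "a' \<le> n" "a \<noteq> a'"
  shows "\<exists>c\<in>code_D n. (fst c \<in> {a, a'}) \<noteq> (snd c \<in> {b, b'})"
proof (cases "2*n - 7 \<in> {b, b'}")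
  case True
  define r where "r = (if n - 3 \<notin> {a, a'} then n - 3 else if n - 2 \<notin> {a, a'} then n - 2 else n - 1)"
  have r_other: "r \<notin> {a, a'}" using assms unfolding r_def by (auto; arith)
  have "r \<in> {n - 3, n - 2, n - 1}" unfolding r_def by auto
  then have "n - 3 \<le> r" "r \<le> n - 1" by auto
  then show ?thesis using True r_other by (intro bexI[of _ "(r, 2*n - 7)"]) (auto simp: mem_code_D)
next
  case False
  define r where "r = (if a = n then a' else a)"
  have "r \<in> {a, a'}" "n - 3 \<le> r" "r \<le> n - 1"
    using assms by (cases "a = n"; simp add: r_def; arith)+
  then show ?thesis using False by (intro bexI[of _ "(r, 2*n - 7)"]) (auto simp: mem_code_D)
qed

lemma code_D_rect:
  assumes "n \<ge> 6" "a \<in> {1..n}" "a' \<in> {1..n}" "a \<noteq> a'"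
  shows "\<exists>c\<in>code_D n. (fst c \<in> {a, a'}) \<noteq> (snd c \<in> {b, b'})"
proof -
  consider "a \<le> n - 4" | "a' \<le> n - 4" | "n - 3 \<le> a" "n - 3 \<le> a'" by linarith
  then show ?thesis
  proof cases
    case 1
    then show ?thesis using code_D_rect_pair_row assms by auto
  next
    case 2
    then show ?thesis using code_D_rect_pair_row[of n a' a b b'] assms by (auto simp: insert_commute)
  next
    case 3
    then show ?thesis using code_D_rect_last_rows assms by auto
  qed
qed

theorem code_D_identifying:
  assumes "n \<ge> 6"
  shows "identifying_code n (2*n - 5) (code_D n)"
proof (rule identifying_code_criterion)
  show "code_D n \<subseteq> KV n (2*n - 5)" using code_D_subset[OF assms] .
  show "\<exists>c\<in>code_D n. c = x \<or> Kadj x c" if "x \<in> KV n (2*n - 5)" for x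
    using code_D_dominating[OF assms] that by (cases x) auto
  show "\<exists>c\<in>code_D n. fst c \<in> {a, a'}" if "a \<in> {1..n}" for a a'
    using code_D_row[OF assms that] by force
  show "\<exists>c\<in>code_D n. snd c \<in> {b, b'}"
    if "b \<in> {1..2*n - 5}" "b' \<in> {1..2*n - 5}" "b \<noteq> b'" for b b'
  proof -
    have "b \<in> {1..2*n - 6} \<or> b' \<in> {1..2*n - 6}" using that by auto
    then obtain c d where "(c, d) \<in> code_D n" "d \<in> {b, b'}"
      using code_D_column[OF assms] by blast
    then show ?thesis by force
  qed
  show "\<exists>c\<in>code_D n. (fst c \<in> {a, a'}) \<noteq> (snd c \<in> {b, b'})"
    if "a \<in> {1..n}" "a' \<in> {1..n}" "a \<noteq> a'" for a a' b b'
    using code_D_rect[OF assms that] .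
qed

lemma card_code_D:
  assumes "n \<ge> 6"
  shows "card (code_D n) = 2*n - 4"
proof -
  define P where "P = Sigma {1..n-4} (\<lambda>i. {2*i - 1, 2*i})"
  define F where "F = {(n - 3, 2*n - 7), (n - 2, 2*n - 7), (n - 1, 2*n - 7), (n, 2*n - 6)}"
  have D: "code_D n = P \<union> F" unfolding code_D_def P_def F_def by auto
  have "card P = (\<Sum>i\<in>{1..n-4}. card {2*i - 1, 2*i})"
    unfolding P_def by (rule card_SigmaI) auto
  also have "\<dots> = (\<Sum>i\<in>{1..n-4}. 2)" by (intro sum.cong) auto
  also have "\<dots> = 2 * (n - 4)" by simp
  finally have cP: "card P = 2 * (n - 4)" .
  have "n - 3 \<noteq> n - 2" "n - 3 \<noteq> n - 1" "n - 2 \<noteq> n - 1" "n - 1 \<noteq> n"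
    using assms by auto
  then have cF: "card F = 4" unfolding F_def by auto
  have "P \<inter> F = {}" unfolding P_def F_def using assms by auto
  then have "card (code_D n) = card P + card F"
    unfolding D by (intro card_Un_disjoint) (auto simp: P_def F_def)
  then show ?thesis using cP cF assms by simp
qed

theorem mainTheorem15:
  fixes n :: nat
  assumes "n \<ge> 6"
  defines "D \<equiv> {(i, 2*i - 1) | i. 1 \<le> i \<and> i \<le> n - 4} \<union> {(i, 2*i) | i. 1 \<le> i \<and> i \<le> n - 4}
            \<union> {(n - 3, 2*n - 7), (n - 2, 2*n - 7), (n - 1, 2*n - 7), (n, 2*n - 6)}"
  shows "identifying_code n (2*n - 5) D \<and> card D = 2*n - 4"
proof -
  have "D = code_D n" unfolding D_def code_D_def ..
  then show ?thesis using code_D_identifying card_code_D assms by simp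
qed

end
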